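(* Let $(\mathcal S,\mathcal A,P,r)$ be a finite MDP such that $\mathcal P^\pi g^\star=g^\star$ for every policy $\pi$, and let $(g^\star,h^\star)$ be a solution of the modified Bellman equations. Let $0<\lambda_j<1$ for $j\ge1$, $V^0\in\mathbb R^n$, $V^k=\lambda_kV^{k-1}+(1-\lambda_k)TV^{k-1}$ for $k\ge1$, and let $\pi_k$ be greedy policies, $T^{\pi_k}V^k=TV^k$. Then for every $k\ge1$, \[\|g^\star-g^{\pi_k}\|_\infty\le\|TV^k-V^k-g^\star\|_\infty\le\frac{2\|V^0-h^\star\|_\infty}{\sqrt{\varpi\sum_{i=1}^k\lambda_i(1-\lambda_i)}},\] where $\varpi=3.141592\ldots$ is the circle constant.
   Context: An MDP $(\mathcal S,\mathcal A,P,r)$ has finite state space $\mathcal S$ ($|\mathcal S|=n$, functions identified with $\mathbb R^n$), finite action space, transition probabilities $P(s'\mid s,a)$ and bounded reward $r$. For a policy $\pi$: $r^\pi(s)=\sum_a\pi(a\mid s)r(s,a)$, $\mathcal P^\pi(s,s')=\sum_a\pi(a\mid s)P(s'\mid s,a)$, $g^\pi(s)=\liminf_{T\to\infty}\frac1T\mathbb E_\pi[\sum_{t=0}^{T-1}r(s_t,a_t)\mid s_0=s]$, $g^\star=\max_\pi g^\pi$. $T^\pi V=r^\pi+\mathcal P^\pi V$, $(TV)(s)=\max_a\{r(s,a)+\sum_{s'}P(s'\mid s,a)V(s')\}$. A pair $(g,h)$ solves the modified Bellman equations if $\max_a\sum_{s'}P(s'\mid s,a)g(s')=g(s)$ and $\max_a\{r(s,a)+\sum_{s'}P(s'\mid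 s,a)h(s')\}=h(s)+g(s)$ for all $s$, with some policy attaining both maxima simultaneously; the first component of any solution equals $g^\star$. *)

theory Defs
  imports "HOL-Analysis.Analysis" "HOL-Library.Liminf_Limsup"
begin

definition is_mdp :: "('s::finite \<Rightarrow> 'a::finite \<Rightarrow> 's \<Rightarrow> real) \<Rightarrow> bool" where
  "is_mdp P \<longleftrightarrow> (\<forall>s a s'. 0 \<le> P s a s') \<and> (\<forall>s a. (\<Sum>s'\<in>UNIV. P s a s') = 1)"

text \<open>(Stationary, possibly randomized) policy pol s a = pi(a|s).\<close>
definition is_policy :: "('s::finite \<Rightarrow> 'a::finite \<Rightarrow> real) \<Rightarrow> bool" where
  "is_policy pol \<longleftrightarrow> (\<forall>s a. 0 \<le> pol s a) \<and> (\<forall>s. (\<Sum>a\<in>UNIV. pol s a) = 1)"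

definition r_pol :: "('s::finite \<Rightarrow> 'a::finite \<Rightarrow> real) \<Rightarrow> ('s \<Rightarrow> 'a \<Rightarrow> real) \<Rightarrow> 's \<Rightarrow> real" where
  "r_pol r pol s = (\<Sum>a\<in>UNIV. pol s a * r s a)"

definition P_pol :: "('s::finite \<Rightarrow> 'a::finite \<Rightarrow> 's \<Rightarrow> real) \<Rightarrow> ('s \<Rightarrow> 'a \<Rightarrow> real) \<Rightarrow> ('s \<Rightarrow> real) \<Rightarrow> 's \<Rightarrow> real" where
  "P_pol P pol V s = (\<Sum>a\<in>UNIV. pol s a * (\<Sum>s'\<in>UNIV. P s a s' * V s'))"

definition T_pol :: "('s::finite \<Rightarrow> 'a::finite \<Rightarrow> 's \<Rightarrow> real) \<Rightarrow> ('s \<Rightarrow> 'a \<Rightarrow> real) \<Rightarrow> ('s \<Rightarrow> 'a \<Rightarrow> real) \<Rightarrow> ('s \<Rightarrow> real) \<Rightarrow> 's \<Rightarrow> real" where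
  "T_pol P r pol V s = r_pol r pol s + P_pol P pol V s"

definition T_op :: "('s::finite \<Rightarrow> 'a::finite \<Rightarrow> 's \<Rightarrow> real) \<Rightarrow> ('s \<Rightarrow> 'a \<Rightarrow> real) \<Rightarrow> ('s \<Rightarrow> real) \<Rightarrow> 's \<Rightarrow> real" where
  "T_op P r V s = (MAX a\<in>UNIV. r s a + (\<Sum>s'\<in>UNIV. P s a s' * V s'))"

text \<open>Gain g^pi(s) = liminf_T (1/T) E_pi[sum_{t<T} r(s_t,a_t) | s_0 = s]
  = liminf_T (1/T) sum_{t<T} ((P^pi)^t r^pi)(s) for a stationary Markov policy.\<close>
definition gain :: "('s::finite \<Rightarrow> 'a::finite \<Rightarrow> 's \<Rightarrow> real) \<Rightarrow> ('s \<Rightarrow> 'a \<Rightarrow> real) \<Rightarrow> ('s \<Rightarrow> 'a \<Rightarrow> real) \<Rightarrow> 's \<Rightarrow> real" where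
  "gain P r pol s = real_of_ereal (liminf (\<lambda>T::nat.
      ereal ((1 / real T) * (\<Sum>t<T. ((P_pol P pol ^^ t) (r_pol r pol)) s))))"

definition gstar :: "('s::finite \<Rightarrow> 'a::finite \<Rightarrow> 's \<Rightarrow> real) \<Rightarrow> ('s \<Rightarrow> 'a \<Rightarrow> real) \<Rightarrow> 's \<Rightarrow> real" where
  "gstar P r s = (SUP pol\<in>{pol. is_policy pol}. gain P r pol s)"

definition modified_bellman :: "('s::finite \<Rightarrow> 'a::finite \<Rightarrow> 's \<Rightarrow> real) \<Rightarrow> ('s \<Rightarrow> 'a \<Rightarrow> real) \<Rightarrow> ('s \<Rightarrow> real) \<Rightarrow> ('s \<Rightarrow> real) \<Rightarrow> bool" where
  "modified_bellman P r g h \<longleftrightarrow>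
     (\<forall>s. (MAX a\<in>UNIV. (\<Sum>s'\<in>UNIV. P s a s' * g s')) = g s) \<and>
     (\<forall>s. (MAX a\<in>UNIV. r s a + (\<Sum>s'\<in>UNIV. P s a s' * h s')) = h s + g s) \<and>
     (\<forall>s. \<exists>a. (\<Sum>s'\<in>UNIV. P s a s' * g s') = g s \<and>
              r s a + (\<Sum>s'\<in>UNIV. P s a s' * h s') = h s + g s)"

definition sup_norm :: "('s::finite \<Rightarrow> real) \<Rightarrow> real" where
  "sup_norm V = (MAX s\<in>UNIV. \<bar>V s\<bar>)"

end

theory Submission
  imports Defs "HOL-Probability.Probability"
begin

(* Subtracting the drift, x_k = V^k - tau_k g* with tau_k = (1 - lam_1) + ... + (1 - lam_k), turns the
   damped value iteration into the Krasnoselskii-Mann iteration x_k = lam_k x_(k-1) + (1 - lam_k) F x_(k-1)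
   for F = T - g*, which is nonexpansive in the sup norm, has h* as a fixed point, and satisfies
   F x_k - x_k = T V^k - V^k - g*.  Following Bravo and Cominetti, a joint induction over m + n bounds
   both |x_n - x_m| and |F x_n - x_m| by 2 |x_0 - h*| times probabilities of events for a lazy random
   walk whose j-th step moves by +1 or -1 with probability lam_j (1 - lam_j) each.  For m = n = k the
   event is that the walk ends in {0, 1}; by Fourier inversion this probability is
   (1 / 2 pi) Int_[-pi,pi] Prod_j (1 - 2 p_j (1 - cos t)) (1 + cos t) dt, and the bound 1 - u <= exp (-u)
   followed by the substitution y = sin (t / 2) reduces it to a Gaussian integral, at most
   1 / sqrt (pi Sum_j p_j).
   For the first inequality, summing T^pi V^k = T V^k along the chain of a greedy policy pi shows that
   the Cesaro averages of r^pi stay within |T V^k - V^k - g*| + O(1 / T) of g*, because P^pi fixes g*. *)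

lemma sup_norm_ge: "\<bar>f s\<bar> \<le> sup_norm (f :: 's::finite \<Rightarrow> real)"
  unfolding sup_norm_def by (rule Max_ge) auto

lemma sup_norm_leI: "(\<And>s. \<bar>f s\<bar> \<le> B) \<Longrightarrow> sup_norm (f :: 's::finite \<Rightarrow> real) \<le> B"
  unfolding sup_norm_def by (subst Max_le_iff) auto

lemma sup_norm_nonneg: "0 \<le> sup_norm (f :: 's::finite \<Rightarrow> real)"
  using sup_norm_ge[of f undefined] by linarith

lemma sup_norm_lincomb_le:
  fixes f g :: "'s::finite \<Rightarrow> real"
  assumes "0 \<le> a" "0 \<le> b"
  shows "sup_norm (\<lambda>s. a * f s + b * g s) \<le> a * sup_norm f + b * sup_norm g"
proof (rule sup_norm_leI)
  fix s
  have "\<bar>a * f s + b * g s\<bar> \<le> a * \<bar>f s\<bar> + b * \<bar>g s\<bar>"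
    using assms by (simp add: abs_mult abs_triangle_ineq[THEN order_trans])
  also have "\<dots> \<le> a * sup_norm f + b * sup_norm g"
    using assms by (intro add_mono mult_left_mono sup_norm_ge) auto
  finally show "\<bar>a * f s + b * g s\<bar> \<le> a * sup_norm f + b * sup_norm g" .
qed

lemma sup_norm_convex_comb_le:
  fixes f g :: "'s::finite \<Rightarrow> real"
  assumes "0 \<le> t" "t \<le> 1" "sup_norm f \<le> A" "sup_norm g \<le> B"
  shows "sup_norm (\<lambda>s. (1 - t) * f s + t * g s) \<le> (1 - t) * A + t * B"
proof -
  have "sup_norm (\<lambda>s. (1 - t) * f s + t * g s) \<le> (1 - t) * sup_norm f + t * sup_norm g"
    using assms by (intro sup_norm_lincomb_le) auto
  also have "\<dots> \<le> (1 - t) * A + t * B"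
    using assms by (intro add_mono mult_left_mono) auto
  finally show ?thesis .
qed

lemma sup_norm_add_le:
  fixes f g :: "'s::finite \<Rightarrow> real"
  shows "sup_norm (\<lambda>s. f s + g s) \<le> sup_norm f + sup_norm g"
  using sup_norm_lincomb_le[of 1 1 f g] by simp

lemma sup_norm_diff_commute: "sup_norm (\<lambda>s. f s - g s) = sup_norm (\<lambda>s. g s - (f s :: real))"
  unfolding sup_norm_def by (simp add: abs_minus_commute)

section \<open>A lazy random walk on the integers\<close>

(* walk_expect p n f is the expectation of f (S_n), where S_0 = 0 and the j-th step of S moves by +1
   and by -1 with probability p j each. *)

definition lazy_step :: "real \<Rightarrow> (int \<Rightarrow> real) \<Rightarrow> int \<Rightarrow> real" where
  "lazy_step q f s = q * f (s + 1) + q * f (s - 1) + (1 - 2 * q) * f s"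

primrec walk_expect :: "(nat \<Rightarrow> real) \<Rightarrow> nat \<Rightarrow> (int \<Rightarrow> real) \<Rightarrow> real" where
  "walk_expect p 0 f = f 0"
| "walk_expect p (Suc n) f = walk_expect p n (lazy_step (p (Suc n)) f)"

definition band :: "int \<Rightarrow> int \<Rightarrow> real" where
  "band y s = (if 1 - y \<le> s \<and> s \<le> y then 1 else 0)"

(* band_mix mu m n y s is the expectation of band (y + B) s, where B counts the successes of
   independent trials m + 1, ..., n with success probabilities mu j.  Hence km_weight mu m n y is the
   probability that 1 - y - B <= S_m <= y + B for the walk with p j = mu j * (1 - mu j). *)

primrec band_mix :: "(nat \<Rightarrow> real) \<Rightarrow> nat \<Rightarrow> nat \<Rightarrow> int \<Rightarrow> int \<Rightarrow> real" where
  "band_mix mu m 0 y s = band y s"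
| "band_mix mu m (Suc n) y s = (if Suc n \<le> m then band y s
      else (1 - mu (Suc n)) * band_mix mu m n y s + mu (Suc n) * band_mix mu m n (y + 1) s)"

definition km_weight :: "(nat \<Rightarrow> real) \<Rightarrow> nat \<Rightarrow> nat \<Rightarrow> int \<Rightarrow> real" where
  "km_weight mu m n y = walk_expect (\<lambda>j. mu j * (1 - mu j)) m (band_mix mu m n y)"

lemma walk_expect_lincomb:
  "walk_expect p n (\<lambda>s. a * f s + b * g s) = a * walk_expect p n f + b * walk_expect p n g"
proof (induction n arbitrary: f g)
  case 0
  then show ?case by simp
next
  case (Suc n)
  have "lazy_step (p (Suc n)) (\<lambda>s. a * f s + b * g s)
      = (\<lambda>s. a * lazy_step (p (Suc n)) f s + b * lazy_step (p (Suc n)) g s)"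
    by (rule ext) (simp add: lazy_step_def algebra_simps)
  then show ?case using Suc by simp
qed

lemma walk_expect_zero: "walk_expect p n (\<lambda>s. 0) = 0"
  using walk_expect_lincomb[of p n 0 "\<lambda>s. 0" 0 "\<lambda>s. 0"] by simp

lemma band_mix_below: "n \<le> m \<Longrightarrow> band_mix mu m n y s = band y s"
  by (induction n) auto

lemma band_mix_eq_1: "1 - y \<le> s \<Longrightarrow> s \<le> y \<Longrightarrow> band_mix mu m n y s = 1"
proof (induction n arbitrary: y)
  case 0
  then show ?case by (simp add: band_def)
next
  case (Suc n)
  have "band_mix mu m n (y + 1) s = 1" using Suc.prems by (intro Suc.IH) auto
  then show ?case using Suc by (auto simp: band_def algebra_simps)
qed

lemma band_harmonic: "y \<ge> 1 \<Longrightarrow> band y (s + 1) + band y (s - 1) = band (y + 1) s + band (y - 1) s"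
  unfolding band_def by (split if_split)+ linarith

lemma band_mix_harmonic:
  "y \<ge> 1 \<Longrightarrow> band_mix mu m n y (s + 1) + band_mix mu m n y (s - 1)
     = band_mix mu m n (y + 1) s + band_mix mu m n (y - 1) s"
proof (induction n arbitrary: y)
  case 0
  then show ?case using band_harmonic by simp
next
  case (Suc n)
  show ?case
  proof (cases "Suc n \<le> m")
    case True
    then show ?thesis using band_harmonic Suc.prems by simp
  next
    case False
    let ?E = "band_mix mu m n" and ?q = "mu (Suc n)"
    have step: "band_mix mu m (Suc n) y' t = (1 - ?q) * ?E y' t + ?q * ?E (y' + 1) t" for y' t
      using False by simp
    have "band_mix mu m (Suc n) y (s + 1) + band_mix mu m (Suc n) y (s - 1)
       = (1 - ?q) * (?E y (s + 1) + ?E y (s - 1)) + ?q * (?E (y + 1) (s + 1) + ?E (y + 1) (s - 1))"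
      by (simp only: step) (simp add: algebra_simps)
    also have "\<dots> = (1 - ?q) * (?E (y + 1) s + ?E (y - 1) s) + ?q * (?E (y + 1 + 1) s + ?E (y + 1 - 1) s)"
      using Suc by (simp only: Suc.IH)
    also have "\<dots> = band_mix mu m (Suc n) (y + 1) s + band_mix mu m (Suc n) (y - 1) s"
      by (simp only: step) (simp add: algebra_simps)
    finally show ?thesis .
  qed
qed

lemma band_mix_peel:
  "Suc m \<le> n \<Longrightarrow> band_mix mu m n y s
     = (1 - mu (Suc m)) * band_mix mu (Suc m) n y s + mu (Suc m) * band_mix mu (Suc m) n (y + 1) s"
proof (induction n arbitrary: y)
  case 0
  then show ?case by simp
next
  case (Suc n)
  show ?case
  proof (cases "Suc m = Suc n")
    case True
    then show ?thesis by (simp add: band_mix_below)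
  next
    case False
    then have le: "Suc m \<le> n" using Suc.prems by simp
    have not_le: "\<not> Suc n \<le> m" "\<not> Suc n \<le> Suc m" using le False by auto
    show ?thesis
      unfolding band_mix.simps if_not_P[OF not_le(1)] if_not_P[OF not_le(2)] Suc.IH[OF le]
      by (simp add: algebra_simps)
  qed
qed

lemma km_weight_Suc_right:
  assumes "m \<le> n"
  shows "km_weight mu m (Suc n) y = (1 - mu (Suc n)) * km_weight mu m n y + mu (Suc n) * km_weight mu m n (y + 1)"
proof -
  have "band_mix mu m (Suc n) y
      = (\<lambda>s. (1 - mu (Suc n)) * band_mix mu m n y s + mu (Suc n) * band_mix mu m n (y + 1) s)"
    using assms by (intro ext) simp
  then show ?thesis unfolding km_weight_def by (simp add: walk_expect_lincomb)
qed

(* Since band_mix is discretely harmonic in (y, s), a lazy step with probability q (1 - q) applied to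
   E 1 equals two successive q-mixtures in y: the walk step m + 1 absorbs the trial m + 1. *)
lemma km_weight_Suc_left:
  assumes le: "Suc m \<le> n"
  shows "km_weight mu (Suc m) n 1 = (1 - mu (Suc m)) * km_weight mu m n 1 + mu (Suc m) * km_weight mu m n 0"
proof -
  define q where "q = mu (Suc m)"
  define p where "p = (\<lambda>j. mu j * (1 - mu j))"
  define E where "E = band_mix mu (Suc m) n"
  have harm: "E 1 (s + 1) + E 1 (s - 1) = E 2 s + E 0 s" for s
    using band_mix_harmonic[of 1 mu "Suc m" n s] by (simp add: E_def)
  have step: "lazy_step (p (Suc m)) (E 1)
      = (\<lambda>s. (1 - q) * ((1 - q) * E 1 s + q * E 2 s) + q * ((1 - q) * E 0 s + q * E 1 s))"
  proof
    fix s
    have "lazy_step (p (Suc m)) (E 1) s = q * (1 - q) * (E 1 (s + 1) + E 1 (s - 1)) + (1 - 2 * (q * (1 - q))) * E 1 s"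
      by (simp add: lazy_step_def p_def q_def algebra_simps)
    also have "\<dots> = q * (1 - q) * (E 2 s + E 0 s) + (1 - 2 * (q * (1 - q))) * E 1 s"
      by (simp only: harm)
    finally show "lazy_step (p (Suc m)) (E 1) s
        = (1 - q) * ((1 - q) * E 1 s + q * E 2 s) + q * ((1 - q) * E 0 s + q * E 1 s)"
      by (simp add: algebra_simps)
  qed
  have peel1: "band_mix mu m n 1 = (\<lambda>s. (1 - q) * E 1 s + q * E 2 s)"
    using band_mix_peel[OF le, of mu 1] by (intro ext) (simp add: E_def q_def)
  have peel0: "band_mix mu m n 0 = (\<lambda>s. (1 - q) * E 0 s + q * E 1 s)"
    using band_mix_peel[OF le, of mu 0] by (intro ext) (simp add: E_def q_def)
  have "km_weight mu (Suc m) n 1 = walk_expect p m (lazy_step (p (Suc m)) (E 1))"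
    by (simp add: km_weight_def p_def E_def)
  also have "\<dots> = (1 - q) * walk_expect p m (\<lambda>s. (1 - q) * E 1 s + q * E 2 s)
      + q * walk_expect p m (\<lambda>s. (1 - q) * E 0 s + q * E 1 s)"
    unfolding step by (rule walk_expect_lincomb)
  also have "\<dots> = (1 - q) * km_weight mu m n 1 + q * km_weight mu m n 0"
    by (simp add: km_weight_def peel1 peel0 p_def)
  finally show ?thesis by (simp add: q_def)
qed

lemma km_weight_diag_0: "km_weight mu m m 0 = 0"
proof -
  have "band_mix mu m m 0 = (\<lambda>s. 0)" by (intro ext) (simp add: band_mix_below band_def)
  then show ?thesis by (simp add: km_weight_def walk_expect_zero)
qed

lemma km_weight_0_1: "km_weight mu 0 n 1 = 1"
  by (simp add: km_weight_def band_mix_eq_1)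

lemma km_weight_diag_1: "km_weight mu n n 1 = walk_expect (\<lambda>j. mu j * (1 - mu j)) n (band 1)"
proof -
  have "band_mix mu n n 1 = band 1" by (intro ext) (simp add: band_mix_below)
  then show ?thesis by (simp add: km_weight_def)
qed

section \<open>Krasnoselskii-Mann iterations of sup-norm nonexpansive maps\<close>

locale km_iteration =
  fixes F :: "('s::finite \<Rightarrow> real) \<Rightarrow> 's \<Rightarrow> real"
    and h :: "'s \<Rightarrow> real"
    and mu :: "nat \<Rightarrow> real"
    and x :: "nat \<Rightarrow> 's \<Rightarrow> real"
  assumes nonexpansive: "\<And>U W. sup_norm (\<lambda>s. F U s - F W s) \<le> sup_norm (\<lambda>s. U s - W s)"
    and fixed_point: "F h = h"
    and step_size: "\<And>j. j \<ge> 1 \<Longrightarrow> 0 \<le> mu j \<and> mu j \<le> 1"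
    and iterate_Suc: "\<And>k. x (Suc k) = (\<lambda>s. (1 - mu (Suc k)) * x k s + mu (Suc k) * F (x k) s)"
begin

lemma dist_fixed_point_le: "sup_norm (\<lambda>s. x k s - h s) \<le> sup_norm (\<lambda>s. x 0 s - h s)"
proof (induction k)
  case 0
  then show ?case by simp
next
  case (Suc k)
  have "(\<lambda>s. x (Suc k) s - h s)
      = (\<lambda>s. (1 - mu (Suc k)) * (x k s - h s) + mu (Suc k) * (F (x k) s - F h s))"
    by (rule ext) (simp add: iterate_Suc fixed_point algebra_simps)
  then have "sup_norm (\<lambda>s. x (Suc k) s - h s)
      \<le> (1 - mu (Suc k)) * sup_norm (\<lambda>s. x 0 s - h s) + mu (Suc k) * sup_norm (\<lambda>s. x 0 s - h s)"
    using step_size[of "Suc k"] Suc nonexpansive[of "x k" h]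
    by (simp add: sup_norm_convex_comb_le)
  then show ?case by (simp add: algebra_simps)
qed

lemma dist_image_start_le: "sup_norm (\<lambda>s. F (x n) s - x 0 s) \<le> 2 * sup_norm (\<lambda>s. x 0 s - h s)"
proof -
  have "sup_norm (\<lambda>s. F (x n) s - x 0 s) \<le> sup_norm (\<lambda>s. F (x n) s - F h s) + sup_norm (\<lambda>s. h s - x 0 s)"
    using sup_norm_add_le[of "\<lambda>s. F (x n) s - F h s" "\<lambda>s. h s - x 0 s"] by (simp add: fixed_point)
  also have "\<dots> \<le> sup_norm (\<lambda>s. x n s - h s) + sup_norm (\<lambda>s. x 0 s - h s)"
    using nonexpansive[of "x n" h] sup_norm_diff_commute[of h "x 0"] by simp
  finally show ?thesis using dist_fixed_point_le[of n] by simp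
qed

(* Induction on m + n: |x_n - x_m| follows from the two bounds for (m, n - 1) by km_weight_Suc_right,
   and |F x_n - x_m| from those for (m - 1, n) by km_weight_Suc_left. *)
lemma dist_iterates_le:
  assumes "m \<le> n"
  shows "sup_norm (\<lambda>s. x n s - x m s) \<le> 2 * sup_norm (\<lambda>s. x 0 s - h s) * km_weight mu m n 0
       \<and> sup_norm (\<lambda>s. F (x n) s - x m s) \<le> 2 * sup_norm (\<lambda>s. x 0 s - h s) * km_weight mu m n 1"
  using assms
proof (induction "m + n" arbitrary: m n rule: less_induct)
  case less
  define R where "R = sup_norm (\<lambda>s. x 0 s - h s)"
  have dist_x: "sup_norm (\<lambda>s. x n s - x m s) \<le> 2 * R * km_weight mu m n 0"
  proof (cases "m = n")
    case True
    then show ?thesis by (simp add: km_weight_diag_0 sup_norm_def)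
  next
    case False
    then obtain n' where n': "n = Suc n'" "m \<le> n'" using less.prems by (cases n) auto
    have "(\<lambda>s. x n s - x m s) = (\<lambda>s. (1 - mu n) * (x n' s - x m s) + mu n * (F (x n') s - x m s))"
      by (rule ext) (simp add: n' iterate_Suc algebra_simps)
    then have "sup_norm (\<lambda>s. x n s - x m s)
        \<le> (1 - mu n) * (2 * R * km_weight mu m n' 0) + mu n * (2 * R * km_weight mu m n' 1)"
      using step_size[of n] less.hyps[of m n'] n' unfolding R_def by (simp add: sup_norm_convex_comb_le)
    then show ?thesis
      using n' by (simp add: km_weight_Suc_right algebra_simps)
  qed
  have dist_Fx: "sup_norm (\<lambda>s. F (x n) s - x m s) \<le> 2 * R * km_weight mu m n 1"
  proof (cases m)
    case 0
    then show ?thesis using dist_image_start_le[of n] by (simp add: R_def km_weight_0_1)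
  next
    case (Suc m')
    have IH: "sup_norm (\<lambda>s. x n s - x m' s) \<le> 2 * R * km_weight mu m' n 0"
        "sup_norm (\<lambda>s. F (x n) s - x m' s) \<le> 2 * R * km_weight mu m' n 1"
      using less.hyps[of m' n] Suc less.prems unfolding R_def by auto
    have "(\<lambda>s. F (x n) s - x m s) = (\<lambda>s. (1 - mu m) * (F (x n) s - x m' s) + mu m * (F (x n) s - F (x m') s))"
      by (rule ext) (simp add: Suc iterate_Suc algebra_simps)
    then have "sup_norm (\<lambda>s. F (x n) s - x m s)
        \<le> (1 - mu m) * (2 * R * km_weight mu m' n 1) + mu m * (2 * R * km_weight mu m' n 0)"
      using step_size[of m] Suc IH order_trans[OF nonexpansive[of "x n" "x m'"] IH(1)]
      by (simp add: sup_norm_convex_comb_le)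
    then show ?thesis
      using Suc less.prems by (simp add: km_weight_Suc_left algebra_simps)
  qed
  show ?case using dist_x dist_Fx by (simp add: R_def)
qed

lemma residual_le: "sup_norm (\<lambda>s. F (x n) s - x n s) \<le> 2 * sup_norm (\<lambda>s. x 0 s - h s) * km_weight mu n n 1"
  using dist_iterates_le[of n n] by simp

end

section \<open>Fourier bound for the return probability of the walk\<close>

lemma lazy_step_cos:
  "lazy_step q (\<lambda>s. cos (of_int s * \<theta> + \<alpha>)) = (\<lambda>s. (1 - 2 * q * (1 - cos \<theta>)) * cos (of_int s * \<theta> + \<alpha>))"
proof
  fix s :: int
  have "cos (of_int (s + 1) * \<theta> + \<alpha>) + cos (of_int (s - 1) * \<theta> + \<alpha>)
      = cos ((of_int s * \<theta> + \<alpha>) + \<theta>) + cos ((of_int s * \<theta> + \<alpha>) - \<theta>)"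
    by (simp add: algebra_simps)
  also have "\<dots> = 2 * cos \<theta> * cos (of_int s * \<theta> + \<alpha>)"
    by (simp only: cos_add cos_diff) simp
  finally show "lazy_step q (\<lambda>s. cos (of_int s * \<theta> + \<alpha>)) s = (1 - 2 * q * (1 - cos \<theta>)) * cos (of_int s * \<theta> + \<alpha>)"
    unfolding lazy_step_def by (simp add: algebra_simps flip: distrib_left)
qed

lemma walk_expect_cos:
  "walk_expect p n (\<lambda>s. cos (of_int s * \<theta> + \<alpha>)) = (\<Prod>j=1..n. 1 - 2 * p j * (1 - cos \<theta>)) * cos \<alpha>"
proof (induction n)
  case 0
  then show ?case by simp
next
  case (Suc n)
  have "walk_expect p (Suc n) (\<lambda>s. cos (of_int s * \<theta> + \<alpha>))
      = (1 - 2 * p (Suc n) * (1 - cos \<theta>)) * walk_expect p n (\<lambda>s. cos (of_int s * \<theta> + \<alpha>))"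
    using walk_expect_lincomb[of p n "1 - 2 * p (Suc n) * (1 - cos \<theta>)" _ 0 "\<lambda>s. 0"]
    by (simp add: lazy_step_cos)
  then show ?case by (simp add: Suc.IH prod.cl_ivl_Suc)
qed

lemma walk_expect_integral:
  assumes "\<And>s. g s integrable_on S"
  shows "walk_expect p n (\<lambda>s. integral S (g s)) = integral S (\<lambda>\<theta>. walk_expect p n (\<lambda>s. g s \<theta>))"
  using assms
proof (induction n arbitrary: g)
  case 0
  then show ?case by simp
next
  case (Suc n)
  define g' where "g' = (\<lambda>s \<theta>. lazy_step (p (Suc n)) (\<lambda>s'. g s' \<theta>) s)"
  have cmult: "(\<lambda>\<theta>. c * g s \<theta>) integrable_on S" for c s
    using integrable_on_cmult_left[OF Suc.prems[of s], of c] by simp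
  have g': "g' s integrable_on S" for s
    unfolding g'_def lazy_step_def by (intro integrable_add cmult)
  have "lazy_step (p (Suc n)) (\<lambda>s. integral S (g s)) = (\<lambda>s. integral S (g' s))"
    by (rule ext) (simp add: g'_def lazy_step_def integral_add integrable_add cmult)
  then have "walk_expect p (Suc n) (\<lambda>s. integral S (g s)) = walk_expect p n (\<lambda>s. integral S (g' s))"
    by simp
  also have "\<dots> = integral S (\<lambda>\<theta>. walk_expect p n (\<lambda>s. g' s \<theta>))"
    by (rule Suc.IH[OF g'])
  finally show ?case by (simp add: g'_def)
qed

lemma band_1_eq_integral:
  "band 1 s = integral {-pi..pi} (\<lambda>\<theta>. cos (of_int s * \<theta> + 0) / (2 * pi) + cos (of_int s * \<theta> + - \<theta>) / (2 * pi))"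
proof -
  have shift: "of_int s * \<theta> + - \<theta> = of_int (s - 1) * \<theta>" for \<theta> :: real
    by (simp add: algebra_simps)
  have "((\<lambda>\<theta>. cos (of_int s * \<theta> + 0) / (2 * pi) + cos (of_int s * \<theta> + - \<theta>) / (2 * pi)) has_integral
      (if s = 0 then 2 * pi else 0) / (2 * pi) + (if s - 1 = 0 then 2 * pi else 0) / (2 * pi)) {-pi..pi}"
    unfolding shift add_0_right by (intro has_integral_add has_integral_divide has_integral_cos_nx)
  then show ?thesis by (auto simp: band_def integral_unique)
qed

lemma walk_expect_band_1:
  "walk_expect p n (band 1)
     = integral {-pi..pi} (\<lambda>\<theta>. (\<Prod>j=1..n. 1 - 2 * p j * (1 - cos \<theta>)) * (1 + cos \<theta>) / (2 * pi))"
proof -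
  have "walk_expect p n (band 1) = integral {-pi..pi}
      (\<lambda>\<theta>. walk_expect p n (\<lambda>s. cos (of_int s * \<theta> + 0) / (2 * pi) + cos (of_int s * \<theta> + - \<theta>) / (2 * pi)))"
    unfolding band_1_eq_integral[abs_def]
    by (rule walk_expect_integral) (auto intro!: integrable_continuous_interval continuous_intros)
  also have "\<dots> = integral {-pi..pi} (\<lambda>\<theta>. (\<Prod>j=1..n. 1 - 2 * p j * (1 - cos \<theta>)) * (1 + cos \<theta>) / (2 * pi))"
  proof (rule integral_cong)
    fix \<theta> :: real
    have "walk_expect p n (\<lambda>s. cos (of_int s * \<theta> + 0) / (2 * pi) + cos (of_int s * \<theta> + - \<theta>) / (2 * pi))
      = walk_expect p n (\<lambda>s. cos (of_int s * \<theta> + 0)) / (2 * pi) + walk_expect p n (\<lambda>s. cos (of_int s * \<theta> + - \<theta>)) / (2 * pi)"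
      using walk_expect_lincomb[of p n "1 / (2 * pi)" "\<lambda>s. cos (of_int s * \<theta> + 0)"
          "1 / (2 * pi)" "\<lambda>s. cos (of_int s * \<theta> + - \<theta>)"]
      by simp
    then show "walk_expect p n (\<lambda>s. cos (of_int s * \<theta> + 0) / (2 * pi) + cos (of_int s * \<theta> + - \<theta>) / (2 * pi))
      = (\<Prod>j=1..n. 1 - 2 * p j * (1 - cos \<theta>)) * (1 + cos \<theta>) / (2 * pi)"
      by (simp only: walk_expect_cos) (simp add: algebra_simps add_divide_distrib)
  qed
  finally show ?thesis .
qed

lemma walk_characteristic_le:
  fixes p :: "nat \<Rightarrow> real"
  assumes p: "\<And>j. j \<in> {1..n} \<Longrightarrow> 0 \<le> p j \<and> p j \<le> 1 / 4" and \<theta>: "\<theta> \<in> {-pi..pi}"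
  shows "(\<Prod>j=1..n. 1 - 2 * p j * (1 - cos \<theta>)) * (1 + cos \<theta>)
    \<le> 2 * exp (- (4 * (\<Sum>j=1..n. p j)) * (sin (\<theta> / 2))\<^sup>2) * cos (\<theta> / 2)"
proof -
  have sin2: "1 - cos \<theta> = 2 * (sin (\<theta> / 2))\<^sup>2" and cos2: "1 + cos \<theta> = 2 * (cos (\<theta> / 2))\<^sup>2"
    using cos_double_sin[of "\<theta> / 2"] cos_double_cos[of "\<theta> / 2"] by simp_all
  have c: "0 \<le> 1 - cos \<theta>" "1 - cos \<theta> \<le> 2" using cos_le_one[of \<theta>] cos_ge_minus_one[of \<theta>] by auto
  have "(\<Prod>j=1..n. 1 - 2 * p j * (1 - cos \<theta>)) \<le> (\<Prod>j=1..n. exp (- 2 * p j * (1 - cos \<theta>)))"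
  proof (rule prod_mono)
    fix j assume "j \<in> {1..n}"
    then have "2 * p j * (1 - cos \<theta>) \<le> 2 * (1 / 4) * 2" using p[of j] c by (intro mult_mono) auto
    then show "0 \<le> 1 - 2 * p j * (1 - cos \<theta>) \<and> 1 - 2 * p j * (1 - cos \<theta>) \<le> exp (- 2 * p j * (1 - cos \<theta>))"
      using exp_ge_add_one_self[of "- 2 * p j * (1 - cos \<theta>)"] by auto
  qed
  also have "\<dots> = exp (\<Sum>j=1..n. - 2 * p j * (1 - cos \<theta>))"
    by (subst exp_sum) auto
  also have "(\<Sum>j=1..n. - 2 * p j * (1 - cos \<theta>)) = - (4 * (\<Sum>j=1..n. p j)) * (sin (\<theta> / 2))\<^sup>2"
    by (simp add: sin2 sum_distrib_left sum_distrib_right sum_negf algebra_simps)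
  finally have prod_le: "(\<Prod>j=1..n. 1 - 2 * p j * (1 - cos \<theta>)) \<le> exp (- (4 * (\<Sum>j=1..n. p j)) * (sin (\<theta> / 2))\<^sup>2)" .
  have "0 \<le> cos (\<theta> / 2)" using \<theta> by (intro cos_ge_zero) auto
  then have "(cos (\<theta> / 2))\<^sup>2 \<le> cos (\<theta> / 2)" by (simp add: power2_eq_square mult_left_le)
  then have "1 + cos \<theta> \<le> 2 * cos (\<theta> / 2)" by (simp add: cos2)
  from mult_mono[OF prod_le this]
  have "(\<Prod>j=1..n. 1 - 2 * p j * (1 - cos \<theta>)) * (1 + cos \<theta>)
      \<le> exp (- (4 * (\<Sum>j=1..n. p j)) * (sin (\<theta> / 2))\<^sup>2) * (2 * cos (\<theta> / 2))"
    using cos_ge_minus_one[of \<theta>] by simp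
  then show ?thesis by (simp add: algebra_simps)
qed

lemma gaussian_integral_interval_le:
  fixes a :: real
  assumes a: "a > 0"
  shows "integral {-1..1} (\<lambda>y. exp (- a * y\<^sup>2)) \<le> sqrt (pi / a)"
proof -
  define \<sigma> where "\<sigma> = 1 / sqrt (2 * a)"
  have \<sigma>: "0 < \<sigma>" "\<sigma>\<^sup>2 = 1 / (2 * a)" using a by (simp_all add: \<sigma>_def power_divide)
  have "exp (- a * y\<^sup>2) = sqrt (pi / a) * normal_density 0 \<sigma> y" for y
  proof -
    have "2 * pi * \<sigma>\<^sup>2 = pi / a" using a by (simp add: \<sigma>(2))
    moreover have "-(y - 0)\<^sup>2 / (2 * \<sigma>\<^sup>2) = - a * y\<^sup>2" using a by (simp add: \<sigma>(2))
    ultimately show ?thesis using a by (simp add: normal_density_def)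
  qed
  then have density: "(\<lambda>y. exp (- a * y\<^sup>2)) = (\<lambda>y. sqrt (pi / a) * normal_density 0 \<sigma> y)"
    by auto
  have "integrable lborel (\<lambda>y. exp (- a * y\<^sup>2))"
    unfolding density using \<sigma>(1) by simp
  from has_integral_integral_lborel[OF this]
  have whole_line: "((\<lambda>y. exp (- a * y\<^sup>2)) has_integral sqrt (pi / a)) UNIV"
    unfolding density using \<sigma>(1) by simp
  have "integral {-1..1} (\<lambda>y. exp (- a * y\<^sup>2)) \<le> integral UNIV (\<lambda>y. exp (- a * y\<^sup>2))"
    using whole_line
    by (intro integral_subset_le integrable_continuous_interval) (auto intro!: continuous_intros)
  also have "\<dots> = sqrt (pi / a)" using whole_line by (rule integral_unique)
  finally show ?thesis .
qed

lemma sin_half_substitution: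
  fixes e :: "real \<Rightarrow> real"
  assumes "continuous_on {-1..1} e"
  shows "((\<lambda>\<theta>. e (sin (\<theta> / 2)) * cos (\<theta> / 2)) has_integral 2 * integral {-1..1} e) {-pi..pi}"
proof -
  have "((\<lambda>\<theta>. (cos (\<theta> / 2) / 2) *\<^sub>R e (sin (\<theta> / 2))) has_integral integral {sin (-pi/2)..sin (pi/2)} e) {-pi..pi}"
    by (rule has_integral_substitution[where c = "-1" and d = 1])
       (use assms in \<open>auto intro!: derivative_eq_intros\<close>)
  from has_integral_mult_right[OF this, of 2] show ?thesis
    by (simp add: mult.commute)
qed

lemma walk_expect_band_1_le:
  assumes p: "\<And>j. j \<in> {1..n} \<Longrightarrow> 0 \<le> p j \<and> p j \<le> 1 / 4" and \<sigma>: "0 < (\<Sum>j=1..n. p j)"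
  shows "walk_expect p n (band 1) \<le> 1 / sqrt (pi * (\<Sum>j=1..n. p j))"
proof -
  define \<sigma> where "\<sigma> = (\<Sum>j=1..n. p j)"
  define e where "e = (\<lambda>y::real. exp (- (4 * \<sigma>) * y\<^sup>2))"
  have e_int: "((\<lambda>\<theta>. e (sin (\<theta> / 2)) * cos (\<theta> / 2)) has_integral 2 * integral {-1..1} e) {-pi..pi}"
    unfolding e_def by (intro sin_half_substitution continuous_intros)
  have "walk_expect p n (band 1)
      = integral {-pi..pi} (\<lambda>\<theta>. (\<Prod>j=1..n. 1 - 2 * p j * (1 - cos \<theta>)) * (1 + cos \<theta>) / (2 * pi))"
    by (rule walk_expect_band_1)
  also have "\<dots> \<le> integral {-pi..pi} (\<lambda>\<theta>. e (sin (\<theta> / 2)) * cos (\<theta> / 2) / pi)"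
  proof (rule integral_le)
    show "(\<lambda>\<theta>. (\<Prod>j=1..n. 1 - 2 * p j * (1 - cos \<theta>)) * (1 + cos \<theta>) / (2 * pi)) integrable_on {-pi..pi}"
      by (auto intro!: integrable_continuous_interval continuous_intros)
    show "(\<lambda>\<theta>. e (sin (\<theta> / 2)) * cos (\<theta> / 2) / pi) integrable_on {-pi..pi}"
      using has_integral_divide[OF e_int, of pi] by blast
    show "(\<Prod>j=1..n. 1 - 2 * p j * (1 - cos \<theta>)) * (1 + cos \<theta>) / (2 * pi) \<le> e (sin (\<theta> / 2)) * cos (\<theta> / 2) / pi"
      if "\<theta> \<in> {-pi..pi}" for \<theta>
    proof -
      have "(\<Prod>j=1..n. 1 - 2 * p j * (1 - cos \<theta>)) * (1 + cos \<theta>) \<le> 2 * (e (sin (\<theta> / 2)) * cos (\<theta> / 2))"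
        using walk_characteristic_le[of n p \<theta>] p that by (simp add: e_def \<sigma>_def mult.assoc)
      then have "(\<Prod>j=1..n. 1 - 2 * p j * (1 - cos \<theta>)) * (1 + cos \<theta>) / (2 * pi)
          \<le> 2 * (e (sin (\<theta> / 2)) * cos (\<theta> / 2)) / (2 * pi)"
        by (rule divide_right_mono) simp
      then show ?thesis by simp
    qed
  qed
  also have "\<dots> = 2 * integral {-1..1} e / pi"
    by (rule integral_unique[OF has_integral_divide[OF e_int]])
  also have "\<dots> \<le> 2 * sqrt (pi / (4 * \<sigma>)) / pi"
    using gaussian_integral_interval_le[of "4 * \<sigma>"] \<sigma> unfolding e_def \<sigma>_def
    by (intro divide_right_mono) auto
  also have "\<dots> = 1 / sqrt (pi * \<sigma>)"
    using \<sigma> by (simp add: \<sigma>_def real_sqrt_divide real_sqrt_mult field_simps)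
  finally show ?thesis by (simp add: \<sigma>_def)
qed

lemma km_weight_diag_1_le:
  assumes mu: "\<And>j. j \<in> {1..n} \<Longrightarrow> 0 \<le> mu j \<and> mu j \<le> 1"
    and pos: "0 < (\<Sum>j=1..n. mu j * (1 - mu j))"
  shows "km_weight mu n n 1 \<le> 1 / sqrt (pi * (\<Sum>j=1..n. mu j * (1 - mu j)))"
proof -
  have "0 \<le> mu j * (1 - mu j) \<and> mu j * (1 - mu j) \<le> 1 / 4" if "j \<in> {1..n}" for j
  proof -
    have "0 \<le> (mu j - 1 / 2)\<^sup>2" by simp
    moreover have "mu j * mu j \<le> mu j" using mu[OF that] by (simp add: mult_left_le_one_le)
    ultimately show ?thesis using mu[OF that] by (simp add: power2_eq_square algebra_simps)
  qed
  then show ?thesis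
    unfolding km_weight_diag_1 by (rule walk_expect_band_1_le[OF _ pos])
qed

lemma km_weight_damping_le:
  assumes lam: "\<And>j. j \<ge> 1 \<Longrightarrow> 0 < lam j \<and> lam j < 1" and k: "k \<ge> 1"
  shows "km_weight (\<lambda>j. 1 - lam j) k k 1 \<le> 1 / sqrt (pi * (\<Sum>i=1..k. lam i * (1 - lam i)))"
proof -
  have step_sizes: "0 \<le> 1 - lam j \<and> 1 - lam j \<le> 1" if "j \<in> {1..k}" for j
    using lam[of j] that by auto
  have variances: "(\<Sum>j=1..k. (1 - lam j) * (1 - (1 - lam j))) = (\<Sum>i=1..k. lam i * (1 - lam i))"
    by (simp add: mult.commute)
  have "0 < (\<Sum>i=1..k. lam i * (1 - lam i))"
    using k lam by (intro sum_pos2[of _ 1]) (auto simp: less_imp_le)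
  then show ?thesis
    using km_weight_diag_1_le[of k "\<lambda>j. 1 - lam j", OF step_sizes] unfolding variances by blast
qed

lemma mdp_row_abs_le:
  fixes P :: "'s::finite \<Rightarrow> 'a::finite \<Rightarrow> 's \<Rightarrow> real"
  assumes "is_mdp P"
  shows "\<bar>\<Sum>s'\<in>UNIV. P s a s' * U s'\<bar> \<le> sup_norm U"
proof -
  have "\<bar>\<Sum>s'\<in>UNIV. P s a s' * U s'\<bar> \<le> (\<Sum>s'\<in>UNIV. \<bar>P s a s' * U s'\<bar>)" by (rule sum_abs)
  also have "\<dots> \<le> (\<Sum>s'\<in>UNIV. P s a s' * sup_norm U)"
    using assms by (intro sum_mono) (auto simp: is_mdp_def abs_mult intro: mult_left_mono sup_norm_ge)
  also have "\<dots> = sup_norm U" using assms by (simp add: is_mdp_def sum_distrib_right[symmetric])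
  finally show ?thesis .
qed

lemma P_pol_abs_le:
  fixes P :: "'s::finite \<Rightarrow> 'a::finite \<Rightarrow> 's \<Rightarrow> real"
  assumes "is_mdp P" "is_policy pol"
  shows "\<bar>P_pol P pol U s\<bar> \<le> sup_norm U"
proof -
  have "\<bar>P_pol P pol U s\<bar> \<le> (\<Sum>a\<in>UNIV. \<bar>pol s a * (\<Sum>s'\<in>UNIV. P s a s' * U s')\<bar>)"
    unfolding P_pol_def by (rule sum_abs)
  also have "\<dots> \<le> (\<Sum>a\<in>UNIV. pol s a * sup_norm U)"
    using assms mdp_row_abs_le[OF assms(1)]
    by (intro sum_mono) (auto simp: is_policy_def abs_mult intro: mult_left_mono)
  also have "\<dots> = sup_norm U" using assms by (simp add: is_policy_def sum_distrib_right[symmetric])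
  finally show ?thesis .
qed

lemma P_pol_funpow_abs_le:
  fixes P :: "'s::finite \<Rightarrow> 'a::finite \<Rightarrow> 's \<Rightarrow> real"
  assumes "is_mdp P" "is_policy pol"
  shows "\<bar>(P_pol P pol ^^ t) U s\<bar> \<le> sup_norm U"
proof (induction t arbitrary: s)
  case 0
  then show ?case by (simp add: sup_norm_ge)
next
  case (Suc t)
  have "\<bar>P_pol P pol ((P_pol P pol ^^ t) U) s\<bar> \<le> sup_norm ((P_pol P pol ^^ t) U)"
    by (rule P_pol_abs_le[OF assms])
  also have "\<dots> \<le> sup_norm U" by (rule sup_norm_leI) (rule Suc.IH)
  finally show ?case by simp
qed

lemma P_pol_add: "P_pol P pol (\<lambda>s. U s + W s) = (\<lambda>s. P_pol P pol U s + P_pol P pol W s)"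
  unfolding P_pol_def by (rule ext) (simp add: sum.distrib distrib_left)

lemma P_pol_diff: "P_pol P pol (\<lambda>s. U s - W s) = (\<lambda>s. P_pol P pol U s - P_pol P pol W s)"
  unfolding P_pol_def by (rule ext) (simp add: sum_subtractf right_diff_distrib)

lemma P_pol_funpow_add:
  "(P_pol P pol ^^ t) (\<lambda>s. U s + W s) = (\<lambda>s. (P_pol P pol ^^ t) U s + (P_pol P pol ^^ t) W s)"
  by (induction t) (simp_all add: P_pol_add)

lemma P_pol_funpow_diff:
  "(P_pol P pol ^^ t) (\<lambda>s. U s - W s) = (\<lambda>s. (P_pol P pol ^^ t) U s - (P_pol P pol ^^ t) W s)"
  by (induction t) (simp_all add: P_pol_diff)

lemma Max_image_diff_abs_le:
  fixes f g :: "'a \<Rightarrow> real"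
  assumes "finite A" "A \<noteq> {}" "\<And>a. a \<in> A \<Longrightarrow> \<bar>f a - g a\<bar> \<le> B"
  shows "\<bar>Max (f ` A) - Max (g ` A)\<bar> \<le> B"
proof -
  have "Max (f ` A) \<in> f ` A" "Max (g ` A) \<in> g ` A" using assms by (intro Max_in; simp)+
  then obtain a1 a2 where a1: "a1 \<in> A" "Max (f ` A) = f a1" and a2: "a2 \<in> A" "Max (g ` A) = g a2"
    by auto
  have "f a1 \<le> g a1 + B" "g a2 \<le> f a2 + B" using assms(3) a1(1) a2(1) by fastforce+
  moreover have "g a1 \<le> Max (g ` A)" "f a2 \<le> Max (f ` A)" using a1(1) a2(1) assms(1) by auto
  ultimately show ?thesis using a1(2) a2(2) by linarith
qed

lemma T_op_nonexpansive:
  fixes P :: "'s::finite \<Rightarrow> 'a::finite \<Rightarrow> 's \<Rightarrow> real"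
  assumes "is_mdp P"
  shows "sup_norm (\<lambda>s. T_op P r U s - T_op P r W s) \<le> sup_norm (\<lambda>s. U s - W s)"
proof (rule sup_norm_leI)
  fix s
  show "\<bar>T_op P r U s - T_op P r W s\<bar> \<le> sup_norm (\<lambda>s. U s - W s)"
    unfolding T_op_def
  proof (rule Max_image_diff_abs_le)
    fix a
    have "(r s a + (\<Sum>s'\<in>UNIV. P s a s' * U s')) - (r s a + (\<Sum>s'\<in>UNIV. P s a s' * W s'))
        = (\<Sum>s'\<in>UNIV. P s a s' * (U s' - W s'))"
      by (simp add: sum_subtractf algebra_simps)
    then show "\<bar>(r s a + (\<Sum>s'\<in>UNIV. P s a s' * U s')) - (r s a + (\<Sum>s'\<in>UNIV. P s a s' * W s'))\<bar>
        \<le> sup_norm (\<lambda>s. U s - W s)"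
      using mdp_row_abs_le[OF assms, of s a "\<lambda>s. U s - W s"] by simp
  qed auto
qed

lemma T_op_add_fixed_multiple:
  fixes P :: "'s::finite \<Rightarrow> 'a::finite \<Rightarrow> 's \<Rightarrow> real"
  assumes rows: "\<And>s a. (\<Sum>s'\<in>UNIV. P s a s' * g s') = g s"
  shows "T_op P r (\<lambda>s. U s + t * g s) = (\<lambda>s. T_op P r U s + t * g s)"
proof
  fix s
  have shifted: "(\<lambda>a. r s a + (\<Sum>s'\<in>UNIV. P s a s' * (U s' + t * g s')))
      = (\<lambda>a. (r s a + (\<Sum>s'\<in>UNIV. P s a s' * U s')) + t * g s)"
    using rows[of s] by (simp add: sum.distrib sum_distrib_left algebra_simps flip: sum_distrib_left)
  show "T_op P r (\<lambda>s. U s + t * g s) s = T_op P r U s + t * g s"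
    unfolding T_op_def shifted by (rule Max_add_commute) auto
qed

lemma P_pol_fixed_imp_row_fixed:
  fixes P :: "'s::finite \<Rightarrow> 'a::finite \<Rightarrow> 's \<Rightarrow> real"
  assumes "\<And>pol. is_policy pol \<Longrightarrow> P_pol P pol g = g"
  shows "(\<Sum>s'\<in>UNIV. P s a s' * g s') = g s"
proof -
  define pol where "pol = (\<lambda>(s::'s) b. if b = a then 1 else (0::real))"
  have "is_policy pol" by (simp add: is_policy_def pol_def)
  then have "P_pol P pol g s = g s" using assms by simp
  moreover have "P_pol P pol g s = (\<Sum>b\<in>UNIV. if b = a then (\<Sum>s'\<in>UNIV. P s b s' * g s') else 0)"
    unfolding P_pol_def pol_def by (rule sum.cong) auto
  ultimately show ?thesis by simp
qed

lemma modified_bellman_T_op: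
  "modified_bellman P r g h \<Longrightarrow> T_op P r h = (\<lambda>s. h s + g s)"
  unfolding modified_bellman_def T_op_def by auto

section \<open>Gain of a greedy policy\<close>

lemma liminf_between:
  fixes f :: "nat \<Rightarrow> real"
  assumes "\<And>T. T \<ge> 1 \<Longrightarrow> a - b / real T \<le> f T \<and> f T \<le> c + b / real T"
  shows "a \<le> real_of_ereal (liminf (\<lambda>T. ereal (f T))) \<and> real_of_ereal (liminf (\<lambda>T. ereal (f T))) \<le> c"
proof -
  have lower: "eventually (\<lambda>T. ereal (a - b / real T) \<le> ereal (f T)) sequentially"
   and upper: "eventually (\<lambda>T. ereal (f T) \<le> ereal (c + b / real T)) sequentially"
    using assms by (auto intro: eventually_sequentiallyI[of 1])
  have "((\<lambda>T. ereal (a - b / real T)) \<longlongrightarrow> ereal a) sequentially"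
    using tendsto_diff[OF tendsto_const[of a] lim_const_over_n[of b]] by (simp add: lim_ereal)
  from lim_imp_Liminf[OF trivial_limit_sequentially this]
  have "ereal a \<le> liminf (\<lambda>T. ereal (f T))"
    using Liminf_mono[OF lower] by simp
  moreover have "((\<lambda>T. ereal (c + b / real T)) \<longlongrightarrow> ereal c) sequentially"
    using tendsto_add[OF tendsto_const[of c] lim_const_over_n[of b]] by (simp add: lim_ereal)
  from lim_imp_Liminf[OF trivial_limit_sequentially this]
  have "liminf (\<lambda>T. ereal (f T)) \<le> ereal c"
    using Liminf_mono[OF upper] by simp
  ultimately show ?thesis
    by (cases "liminf (\<lambda>T. ereal (f T))") auto
qed

lemma greedy_cesaro_sum:
  assumes inv: "P_pol P pol g = g" and greedy: "T_pol P r pol W = T_op P r W"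
  shows "(\<Sum>t<T. (P_pol P pol ^^ t) (r_pol r pol) s)
    = W s - (P_pol P pol ^^ T) W s + real T * g s
      + (\<Sum>t<T. (P_pol P pol ^^ t) (\<lambda>s. T_op P r W s - W s - g s) s)"
proof -
  define E where "E = (\<lambda>s. T_op P r W s - W s - g s)"
  let ?Q = "P_pol P pol"
  have reward: "r_pol r pol = (\<lambda>s. W s - ?Q W s + g s + E s)"
  proof
    fix s
    show "r_pol r pol s = W s - ?Q W s + g s + E s"
      using fun_cong[OF greedy, of s] unfolding T_pol_def E_def by linarith
  qed
  have "(?Q ^^ t) g = g" for t
    by (induction t) (simp_all add: inv)
  then have "(?Q ^^ t) (r_pol r pol) s = ((?Q ^^ t) W s - (?Q ^^ Suc t) W s) + (g s + (?Q ^^ t) E s)" for t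
    unfolding reward P_pol_funpow_add P_pol_funpow_diff by (simp add: funpow_swap1)
  then have "(\<Sum>t<T. (?Q ^^ t) (r_pol r pol) s)
      = (\<Sum>t<T. (?Q ^^ t) W s - (?Q ^^ Suc t) W s) + (\<Sum>t<T. g s + (?Q ^^ t) E s)"
    by (simp add: sum.distrib)
  also have "(\<Sum>t<T. (?Q ^^ t) W s - (?Q ^^ Suc t) W s) = W s - (?Q ^^ T) W s"
    using sum_lessThan_telescope'[of "\<lambda>t. (?Q ^^ t) W s" T] by simp
  also have "(\<Sum>t<T. g s + (?Q ^^ t) E s) = real T * g s + (\<Sum>t<T. (?Q ^^ t) E s)"
    by (simp add: sum.distrib)
  finally show ?thesis by (simp add: E_def)
qed

lemma greedy_cesaro_mean_bounds:
  fixes P :: "'s::finite \<Rightarrow> 'a::finite \<Rightarrow> 's \<Rightarrow> real"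
  assumes mdp: "is_mdp P" and pol: "is_policy pol"
    and inv: "P_pol P pol g = g" and greedy: "T_pol P r pol W = T_op P r W"
    and T: "T \<ge> 1"
  defines "\<epsilon> \<equiv> sup_norm (\<lambda>s. T_op P r W s - W s - g s)"
  shows "g s - \<epsilon> - 2 * sup_norm W / real T \<le> (1 / real T) * (\<Sum>t<T. (P_pol P pol ^^ t) (r_pol r pol) s)
    \<and> (1 / real T) * (\<Sum>t<T. (P_pol P pol ^^ t) (r_pol r pol) s) \<le> g s + \<epsilon> + 2 * sup_norm W / real T"
proof -
  define E where "E = (\<lambda>s. T_op P r W s - W s - g s)"
  let ?Q = "P_pol P pol"
  define X where "X = W s - (?Q ^^ T) W s"
  define Y where "Y = (\<Sum>t<T. (?Q ^^ t) E s)"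
  have T_pos: "real T > 0" using T by simp
  have "\<bar>X\<bar> \<le> 2 * sup_norm W"
    using sup_norm_ge[of W s] P_pol_funpow_abs_le[OF mdp pol, of T W s] by (simp add: X_def)
  then have X: "\<bar>X / real T\<bar> \<le> 2 * sup_norm W / real T"
    using T_pos by (simp add: abs_divide divide_right_mono)
  have "\<bar>Y\<bar> \<le> (\<Sum>t<T. \<bar>(?Q ^^ t) E s\<bar>)" unfolding Y_def by (rule sum_abs)
  also have "\<dots> \<le> real T * \<epsilon>"
    using sum_mono[of "{..<T}" "\<lambda>t. \<bar>(?Q ^^ t) E s\<bar>" "\<lambda>t. \<epsilon>"] P_pol_funpow_abs_le[OF mdp pol]
    by (simp add: \<epsilon>_def E_def)
  finally have Y: "\<bar>Y / real T\<bar> \<le> \<epsilon>"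
    using T_pos by (simp add: abs_divide pos_divide_le_eq mult.commute)
  have "(1 / real T) * (\<Sum>t<T. (?Q ^^ t) (r_pol r pol) s) = (1 / real T) * (X + real T * g s + Y)"
    by (simp only: greedy_cesaro_sum[OF inv greedy] X_def Y_def E_def)
  also have "\<dots> = g s + X / real T + Y / real T"
    using T_pos by (simp add: field_simps)
  finally show ?thesis using abs_le_D1[OF X] abs_le_D2[OF X] abs_le_D1[OF Y] abs_le_D2[OF Y] by linarith
qed

lemma greedy_gain_error_le:
  fixes P :: "'s::finite \<Rightarrow> 'a::finite \<Rightarrow> 's \<Rightarrow> real"
  assumes "is_mdp P" "is_policy pol" "P_pol P pol g = g" "T_pol P r pol W = T_op P r W"
  shows "\<bar>g s - gain P r pol s\<bar> \<le> sup_norm (\<lambda>s. T_op P r W s - W s - g s)"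
proof -
  have "g s - sup_norm (\<lambda>s. T_op P r W s - W s - g s) \<le> gain P r pol s
      \<and> gain P r pol s \<le> g s + sup_norm (\<lambda>s. T_op P r W s - W s - g s)"
    unfolding gain_def by (rule liminf_between) (rule greedy_cesaro_mean_bounds[OF assms])
  then show ?thesis by (simp add: abs_le_iff)
qed

section \<open>Damped value iteration\<close>

lemma damped_value_iteration_residual_le:
  fixes P :: "'s::finite \<Rightarrow> 'a::finite \<Rightarrow> 's \<Rightarrow> real"
  assumes mdp: "is_mdp P"
    and rows: "\<And>s a. (\<Sum>s'\<in>UNIV. P s a s' * g s') = g s"
    and fixed: "T_op P r h = (\<lambda>s. h s + g s)"
    and lam: "\<And>j. j \<ge> 1 \<Longrightarrow> 0 \<le> lam j \<and> lam j \<le> 1"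
    and V_rec: "\<And>k. k \<ge> 1 \<Longrightarrow>
        V k = (\<lambda>s. lam k * V (k - 1) s + (1 - lam k) * T_op P r (V (k - 1)) s)"
  shows "sup_norm (\<lambda>s. T_op P r (V k) s - V k s - g s)
    \<le> 2 * sup_norm (\<lambda>s. V 0 s - h s) * km_weight (\<lambda>j. 1 - lam j) k k 1"
proof -
  define tau where "tau k = (\<Sum>j=1..k. 1 - lam j)" for k
  define x where "x k s = V k s - tau k * g s" for k s
  define F where "F U s = T_op P r U s - g s" for U s
  have T_V: "T_op P r (V k) = (\<lambda>s. F (x k) s + g s + tau k * g s)" for k
  proof -
    have "V k = (\<lambda>s. x k s + tau k * g s)" by (simp add: x_def)
    then show ?thesis by (simp add: T_op_add_fixed_multiple[OF rows] F_def)
  qed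
  interpret km_iteration F h "\<lambda>j. 1 - lam j" x
  proof
    show "sup_norm (\<lambda>s. F U s - F W s) \<le> sup_norm (\<lambda>s. U s - W s)" for U W
      using T_op_nonexpansive[OF mdp, of r U W] by (simp add: F_def)
    show "F h = h" by (rule ext) (simp add: F_def fixed)
    show "0 \<le> 1 - lam j \<and> 1 - lam j \<le> 1" if "j \<ge> 1" for j
      using lam[OF that] by simp
    show "x (Suc k) = (\<lambda>s. (1 - (1 - lam (Suc k))) * x k s + (1 - lam (Suc k)) * F (x k) s)" for k
      using V_rec[of "Suc k"] by (intro ext) (simp add: x_def tau_def T_V algebra_simps)
  qed
  have "(\<lambda>s. T_op P r (V k) s - V k s - g s) = (\<lambda>s. F (x k) s - x k s)"
    by (simp add: T_V x_def algebra_simps)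
  then show ?thesis using residual_le[of k] by (simp add: x_def tau_def)
qed

theorem corollary4:
  fixes P :: "'s::finite \<Rightarrow> 'a::finite \<Rightarrow> 's \<Rightarrow> real"
    and r :: "'s \<Rightarrow> 'a \<Rightarrow> real"
    and h :: "'s \<Rightarrow> real"
    and lam :: "nat \<Rightarrow> real"
    and V :: "nat \<Rightarrow> 's \<Rightarrow> real"
    and pols :: "nat \<Rightarrow> 's \<Rightarrow> 'a \<Rightarrow> real"
    and k :: nat
  assumes mdp: "is_mdp P"
    and invariant: "\<And>pol. is_policy pol \<Longrightarrow> P_pol P pol (gstar P r) = gstar P r"
    and bellman: "modified_bellman P r (gstar P r) h"
    and lam_bounds: "\<And>j. j \<ge> 1 \<Longrightarrow> 0 < lam j \<and> lam j < 1"
    and V_rec: "\<And>k. k \<ge> 1 \<Longrightarrow>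
        V k = (\<lambda>s. lam k * V (k - 1) s + (1 - lam k) * T_op P r (V (k - 1)) s)"
    and greedy: "\<And>k. k \<ge> 1 \<Longrightarrow> is_policy (pols k) \<and> T_pol P r (pols k) (V k) = T_op P r (V k)"
    and k_pos: "k \<ge> 1"
  shows "sup_norm (\<lambda>s. gstar P r s - gain P r (pols k) s)
           \<le> sup_norm (\<lambda>s. T_op P r (V k) s - V k s - gstar P r s)
       \<and> sup_norm (\<lambda>s. T_op P r (V k) s - V k s - gstar P r s)
           \<le> 2 * sup_norm (\<lambda>s. V 0 s - h s) / sqrt (pi * (\<Sum>i=1..k. lam i * (1 - lam i)))"
proof -
  have pol: "is_policy (pols k)" and greedy_k: "T_pol P r (pols k) (V k) = T_op P r (V k)"
    using greedy k_pos by auto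
  have gain_error: "sup_norm (\<lambda>s. gstar P r s - gain P r (pols k) s)
      \<le> sup_norm (\<lambda>s. T_op P r (V k) s - V k s - gstar P r s)"
    by (intro sup_norm_leI greedy_gain_error_le[OF mdp pol invariant[OF pol] greedy_k])
  have rows: "(\<Sum>s'\<in>UNIV. P s a s' * gstar P r s') = gstar P r s" for s a
    using invariant by (rule P_pol_fixed_imp_row_fixed)
  have residual: "sup_norm (\<lambda>s. T_op P r (V k) s - V k s - gstar P r s)
      \<le> 2 * sup_norm (\<lambda>s. V 0 s - h s) * km_weight (\<lambda>j. 1 - lam j) k k 1"
  proof (rule damped_value_iteration_residual_le[OF mdp rows modified_bellman_T_op[OF bellman]])
    show "0 \<le> lam j \<and> lam j \<le> 1" if "j \<ge> 1" for j
      using lam_bounds[OF that] by simp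
  qed (fact V_rec)
  have "0 \<le> 2 * sup_norm (\<lambda>s. V 0 s - h s)" using sup_norm_nonneg by simp
  from mult_left_mono[OF km_weight_damping_le[OF lam_bounds k_pos] this]
  have "2 * sup_norm (\<lambda>s. V 0 s - h s) * km_weight (\<lambda>j. 1 - lam j) k k 1
      \<le> 2 * sup_norm (\<lambda>s. V 0 s - h s) * (1 / sqrt (pi * (\<Sum>i=1..k. lam i * (1 - lam i))))" .
  then show ?thesis
    using gain_error residual by (simp only: times_divide_eq_right mult_1_right) (blast intro: order_trans)
qed

end
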